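(* Let $k\in\mathbb{Z}$ and $\imath\in\mathbb{Z}_{>1}$. The rational polygon $\mathrm{conv}((0,0),(k,\imath),(k+1/3,\imath))$ is canonical if and only if either $k+1$ is a multiple of $\imath$, or $\imath$ is odd and $k\equiv\frac{\imath-1}{2}\bmod\imath$.
   Context: For rationals $a<b$ and $\imath\in\mathbb{Z}_{>1}$, the polygon $\mathrm{conv}((0,0),(a,\imath),(b,\imath))$ is called canonical if every lattice point $p\neq(0,0)$ in it satisfies $p_2=\imath$. *)

theory Defs
  imports "HOL-Analysis.Analysis"
begin

definition tri :: "rat \<Rightarrow> rat \<Rightarrow> int \<Rightarrow> (real \<times> real) set" where
  "tri a b i = convex hull {(0, 0), (of_rat a, of_int i), (of_rat b, of_int i)}"

definition canonical :: "rat \<Rightarrow> rat \<Rightarrow> int \<Rightarrow> bool" where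
  "canonical a b i \<longleftrightarrow>
     (\<forall>x y :: int. (of_int x, of_int y) \<in> tri a b i \<and> (x, y) \<noteq> (0, 0) \<longrightarrow> y = i)"

end

theory Submission
  imports Defs
begin

text \<open>
  A lattice point (x, y) lies in conv((0,0),(a,i),(b,i)) exactly when 0 \<le> y \<le> i and
  a y \<le> x i \<le> b y, so canonicity says that no height 0 < y < i admits an integer x with
  k y \<le> x i \<le> (k + 1/3) y, i.e. no residue r = x i - k y with 0 \<le> 3 r \<le> y.
  If i divides c k + 1 for c = 1 or c = 2, then c r \<equiv> y (mod i) while 0 < y - c r < i, so no such
  residue exists. Conversely, if g = gcd(k, i) > 1 then y = i/g gives r = 0; otherwise the
  inverse y of -k modulo i gives r = 1, and y \<ge> 3 unless i divides k + 1 or 2 k + 1.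
\<close>

lemma mem_convex_hull_origin_segment:
  fixes a b h x y :: real
  assumes "a < b" "h > 0"
  shows "(x, y) \<in> convex hull {(0, 0), (a, h), (b, h)} \<longleftrightarrow>
           0 \<le> y \<and> y \<le> h \<and> a * y \<le> x * h \<and> x * h \<le> b * y"
proof -
  have hull: "convex hull {(0, 0), (a, h), (b, h)} =
      {(u * a + v * b, (u + v) * h) | u v. 0 \<le> u \<and> 0 \<le> v \<and> u + v \<le> 1}"
    by (auto simp: convex_hull_3_alt algebra_simps)
  show ?thesis
  proof
    assume "(x, y) \<in> convex hull {(0, 0), (a, h), (b, h)}"
    then obtain u v where uv: "0 \<le> u" "0 \<le> v" "u + v \<le> 1"
      and x: "x = u * a + v * b" and y: "y = (u + v) * h"
      unfolding hull by auto
    have "a * y = (u * a + v * a) * h" "b * y = (u * b + v * b) * h"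
      using y by (simp_all add: algebra_simps)
    moreover have "u * a + v * a \<le> x" "x \<le> u * b + v * b"
      using x uv assms(1) by (simp_all add: mult_left_mono)
    ultimately show "0 \<le> y \<and> y \<le> h \<and> a * y \<le> x * h \<and> x * h \<le> b * y"
      using y uv assms(2) by (simp add: mult_right_mono mult_left_le_one_le)
  next
    assume xy: "0 \<le> y \<and> y \<le> h \<and> a * y \<le> x * h \<and> x * h \<le> b * y"
    define u where "u = (b * y - x * h) / (h * (b - a))"
    define v where "v = (x * h - a * y) / (h * (b - a))"
    have d: "h * (b - a) > 0" using assms by simp
    have nz: "h \<noteq> 0" "b \<noteq> a" using assms by simp_all
    have "(b * y - x * h) + (x * h - a * y) = y * (b - a)" by (simp add: algebra_simps)
    then have "u + v = y * (b - a) / (h * (b - a))"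
      unfolding u_def v_def by (metis add_divide_distrib)
    then have "u + v = y / h" using nz by simp
    then have y: "y = (u + v) * h" using nz by simp
    have "(b * y - x * h) * a + (x * h - a * y) * b = x * (h * (b - a))" by (simp add: algebra_simps)
    then have "u * a + v * b = x * (h * (b - a)) / (h * (b - a))"
      unfolding u_def v_def by (metis add_divide_distrib times_divide_eq_left)
    then have x: "x = u * a + v * b" using nz by simp
    have "0 \<le> u" "0 \<le> v" unfolding u_def v_def using xy d by simp_all
    moreover have "u + v \<le> 1" using y xy assms(2) by (metis mult_le_cancel_right2)
    ultimately show "(x, y) \<in> convex hull {(0, 0), (a, h), (b, h)}"
      unfolding hull using x y by blast
  qed
qed

lemma canonical_iff_no_lattice_point_below:
  fixes a b :: rat and i :: int
  assumes "a < b" "i > 0"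
  shows "canonical a b i \<longleftrightarrow>
           (\<forall>x y :: int. 0 < y \<and> y < i \<longrightarrow> \<not> (a * of_int y \<le> of_int (x * i) \<and> of_int (x * i) \<le> b * of_int y))"
proof -
  have mem: "(of_int x, of_int y) \<in> tri a b i \<longleftrightarrow>
               0 \<le> y \<and> y \<le> i \<and> a * of_int y \<le> of_int (x * i) \<and> of_int (x * i) \<le> b * of_int y"
    for x y :: int
  proof -
    have "of_rat c * real_of_int y \<le> real_of_int x * of_int i \<longleftrightarrow> c * of_int y \<le> of_int (x * i)"
      "real_of_int x * of_int i \<le> of_rat c * real_of_int y \<longleftrightarrow> of_int (x * i) \<le> c * of_int y" for c
      by (metis of_rat_less_eq of_rat_mult of_rat_of_int_eq of_int_mult)+
    moreover have "(of_rat a :: real) < of_rat b" using assms(1) by (simp add: of_rat_less)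
    ultimately show ?thesis
      unfolding tri_def using mem_convex_hull_origin_segment[of "of_rat a" "of_rat b" "of_int i"] assms(2)
      by simp
  qed
  show ?thesis
    unfolding canonical_def mem
  proof (intro iffI allI impI notI)
    fix x y :: int
    assume none: "\<forall>x y. (0 \<le> y \<and> y \<le> i \<and> a * of_int y \<le> of_int (x * i) \<and> of_int (x * i) \<le> b * of_int y) \<and>
                 (x, y) \<noteq> (0, 0) \<longrightarrow> y = i"
      and y: "0 < y \<and> y < i" and xy: "a * of_int y \<le> of_int (x * i) \<and> of_int (x * i) \<le> b * of_int y"
    have "(x, y) \<noteq> (0, 0)" using y by simp
    then have "y = i" using none y xy by auto
    then show False using y by simp
  next
    fix x y :: int
    assume none: "\<forall>x y. 0 < y \<and> y < i \<longrightarrow> \<not> (a * of_int y \<le> of_int (x * i) \<and> of_int (x * i) \<le> b * of_int y)"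
      and xy: "(0 \<le> y \<and> y \<le> i \<and> a * of_int y \<le> of_int (x * i) \<and> of_int (x * i) \<le> b * of_int y) \<and>
               (x, y) \<noteq> (0, 0)"
    have "y \<noteq> 0"
    proof
      assume "y = 0"
      then have "0 \<le> x * i \<and> x * i \<le> 0" using xy by (simp del: of_int_mult)
      then have "x * i = 0" by linarith
      then show False using \<open>y = 0\<close> xy assms(2) by simp
    qed
    moreover have "\<not> (0 < y \<and> y < i)" using none xy by blast
    ultimately show "y = i" using xy by linarith
  qed
qed

lemma no_small_residue_if_dvd:
  fixes k i x y c :: int
  assumes "i dvd c * k + 1" "c \<ge> 0" "0 < y" "y < i"
    and "0 \<le> x * i - k * y" "(c + 1) * (x * i - k * y) \<le> y"
  shows False
proof -
  define r where "r = x * i - k * y"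
  have r: "0 \<le> r" "r + c * r \<le> y" using assms(5,6) unfolding r_def by (simp_all add: algebra_simps)
  have "y - c * r = (c * k + 1) * y - (c * x) * i" unfolding r_def by (simp add: algebra_simps)
  then have "i dvd y - c * r" using assms(1) by simp
  moreover have "0 \<le> c * r" using assms(2) r(1) by simp
  moreover have "c * r < y" using r assms(3) by (cases "r = 0") simp_all
  ultimately show False using assms(4) zdvd_not_zless by fastforce
qed

lemma small_residue_exists_unless_dvd:
  fixes k i :: int
  assumes "i > 1" "\<not> i dvd k + 1" "\<not> i dvd 2 * k + 1"
  obtains x y where "0 < y" "y < i" "0 \<le> x * i - k * y" "3 * (x * i - k * y) \<le> y"
proof (cases "gcd k i = 1")
  case False
  define g where "g = gcd k i"
  have "g > 0" using assms(1) unfolding g_def by simp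
  then have g: "g > 1" "g dvd i" "g dvd k" using False unfolding g_def by linarith simp_all
  have "i div g * g = i" "k div g * g = k" using g by simp_all
  then have "(k div g) * i - k * (i div g) = 0" by (metis mult.assoc mult.commute diff_self)
  moreover have "0 < i div g" "i div g < i"
    using g assms(1) by (simp_all add: pos_imp_zdiv_pos_iff zdvd_imp_le int_div_less_self)
  ultimately show ?thesis using that[of "i div g" "k div g"] by simp
next
  case True
  obtain u v where uv: "u * k + v * i = 1" using bezout_int[of k i] True by metis
  define y where "y = (- u) mod i"
  have y: "0 \<le> y" "y < i" unfolding y_def using assms(1) by simp_all
  have "y mod i = (- u) mod i" unfolding y_def by simp
  then have "i dvd y - (- u)" by (simp only: mod_eq_dvd_iff)
  then have "i dvd k * (y - (- u)) + v * i" by simp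
  moreover have "k * (y - (- u)) + v * i = k * y + 1" using uv by (simp add: algebra_simps)
  ultimately have dy: "i dvd k * y + 1" by metis
  have "y \<noteq> 0" using dy assms(1) by (auto simp: zdvd1_eq)
  moreover have "y \<noteq> 1" using dy assms(2) by (metis mult.right_neutral)
  moreover have "y \<noteq> 2" using dy assms(3) by (metis mult.commute)
  ultimately have "3 \<le> y" using y by linarith
  moreover have "(k * y + 1) div i * i - k * y = 1" using dy by simp
  ultimately show ?thesis using y by (intro that[of y "(k * y + 1) div i"]) auto
qed

lemma odd_mod_half_iff_dvd:
  fixes k i :: int
  shows "odd i \<and> k mod i = ((i - 1) div 2) mod i \<longleftrightarrow> i dvd 2 * k + 1"
proof
  assume "odd i \<and> k mod i = ((i - 1) div 2) mod i"
  then obtain m where i: "i = 2 * m + 1" and "k mod i = m mod i" by (auto elim: oddE)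
  then have "i dvd k - m" by (simp add: mod_eq_dvd_iff)
  then have "i dvd 2 * (k - m) + i" by (intro dvd_add dvd_mult) simp_all
  also have "2 * (k - m) + i = 2 * k + 1" using i by simp
  finally show "i dvd 2 * k + 1" .
next
  assume d: "i dvd 2 * k + 1"
  have "odd i"
  proof
    assume "even i"
    then have "2 dvd 2 * k + 1" using d by (rule dvd_trans)
    then show False by simp
  qed
  then obtain m where i: "i = 2 * m + 1" by (auto elim: oddE)
  have "k - m = (2 * k + 1) * (m + 1) - i * (k + 1)" using i by (simp add: algebra_simps)
  then have "i dvd k - m" using d by simp
  then show "odd i \<and> k mod i = ((i - 1) div 2) mod i"
    using \<open>odd i\<close> i by (simp add: mod_eq_dvd_iff)
qed

lemma plus_third_window_iff:
  fixes k x y i :: int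
  shows "of_int k * of_int y \<le> (of_int (x * i) :: rat) \<and> of_int (x * i) \<le> (of_int k + 1/3 :: rat) * of_int y
           \<longleftrightarrow> 0 \<le> x * i - k * y \<and> 3 * (x * i - k * y) \<le> y"
proof -
  have "of_int k * of_int y \<le> (of_int (x * i) :: rat) \<longleftrightarrow> 0 \<le> x * i - k * y"
    unfolding of_int_mult[symmetric] of_int_le_iff by simp
  moreover have "of_int (x * i) \<le> (of_int k + 1/3 :: rat) * of_int y \<longleftrightarrow>
      of_int (3 * (x * i - k * y)) \<le> (of_int y :: rat)"
    by (simp add: field_simps)
  ultimately show ?thesis by (simp only: of_int_le_iff)
qed

lemma no_small_residue_iff_dvd:
  fixes k i :: int
  assumes "i > 1"
  shows "(\<forall>x y. 0 < y \<and> y < i \<longrightarrow> \<not> (0 \<le> x * i - k * y \<and> 3 * (x * i - k * y) \<le> y)) \<longleftrightarrow>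
           i dvd k + 1 \<or> i dvd 2 * k + 1"
proof
  assume "\<forall>x y. 0 < y \<and> y < i \<longrightarrow> \<not> (0 \<le> x * i - k * y \<and> 3 * (x * i - k * y) \<le> y)"
  then show "i dvd k + 1 \<or> i dvd 2 * k + 1"
    using small_residue_exists_unless_dvd[OF assms] by blast
next
  assume d: "i dvd k + 1 \<or> i dvd 2 * k + 1"
  show "\<forall>x y. 0 < y \<and> y < i \<longrightarrow> \<not> (0 \<le> x * i - k * y \<and> 3 * (x * i - k * y) \<le> y)"
  proof (intro allI impI notI)
    fix x y
    assume y: "0 < y \<and> y < i" and r: "0 \<le> x * i - k * y \<and> 3 * (x * i - k * y) \<le> y"
    show False
      using d no_small_residue_if_dvd[of i 1 k y x] no_small_residue_if_dvd[of i 2 k y x] y r by auto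
  qed
qed

theorem mainTheorem10:
  fixes k i :: int
  assumes "i > 1"
  shows "canonical (of_int k) (of_int k + 1/3) i \<longleftrightarrow>
           (i dvd (k + 1) \<or> (odd i \<and> k mod i = ((i - 1) div 2) mod i))"
proof -
  have "canonical (of_int k) (of_int k + 1/3) i \<longleftrightarrow>
      (\<forall>x y. 0 < y \<and> y < i \<longrightarrow> \<not> (0 \<le> x * i - k * y \<and> 3 * (x * i - k * y) \<le> y))"
    by (rule canonical_iff_no_lattice_point_below[of "of_int k" "of_int k + 1/3" i, unfolded plus_third_window_iff])
      (use assms in simp_all)
  then show ?thesis
    unfolding no_small_residue_iff_dvd[OF assms] odd_mod_half_iff_dvd .
qed

end
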